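(* Let $0<a<1$ and let $(\mathbf X_j)$ be the persistent random walk on $\mathbb Z$ with persistence parameter $a$ started at $0$; let $\mathbf L:=\inf\{j\ge1:\mathbf X_j=0\}$ and $\mathbf R,\mathbf V$ the numbers of runs and short runs of the excursion path $\mathbf X_0,\dots,\mathbf X_{\mathbf L}$. Let $K:=E\{r^{\mathbf R}y^{\mathbf V}z^{\mathbf L}\}$ and $\alpha_a:=\sqrt{\beta_a^2-4x_a}$, the square root taken as the formal power series in $z$ (with coefficients polynomial in $r,y$) having value $1$ at $z=0$. Then $$K=\frac{1-\frac12\beta_a-\frac12\alpha_a}{1-a},$$ and $K=\lim_{N\to\infty}E\{r^{\mathbf R}y^{\mathbf V}z^{\mathbf L}\mid \mathbf H\le N\}$, where $\mathbf H:=\max_{1\le j\le\mathbf L}|\mathbf X_j|$.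
   Context: Persistent random walk with parameter $a$: increments $\varepsilon_j\in\{\pm1\}$, $P(\varepsilon_1=\pm1)=\frac12$, and for $j\ge1$ the next increment equals the previous one with probability $a$ and is reversed with probability $1-a$. A run is a maximal block of consecutive steps all $+1$ or all $-1$; a short run is a run of one step. $\tau_a:=1+(1-a)^2r^2z^2y(1-y)$, $x_a:=a^2z^2\tau_a^2$, $\beta_a:=1+z^2\big(a^2-(1-a)^2r^2(y^2+a^2(1-y)^2z^2)\big)$. The limit is coefficientwise in the power series in $z$. *)

theory Defs
  imports "HOL-Analysis.Analysis" "HOL-Computational_Algebra.Formal_Power_Series"
begin

text \<open>Paths of the persistent random walk are encoded by their list of increments
  eps_1, ..., eps_n (True = +1, False = -1).\<close>

definition stepv :: "bool \<Rightarrow> int" where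
  "stepv b = (if b then 1 else -1)"

definition pos :: "bool list \<Rightarrow> nat \<Rightarrow> int" where
  "pos es j = (\<Sum>i<j. stepv (es ! i))"

text \<open>Probability that the first length(es) increments equal es:
  1/2 for the first one, then a factor a for each repetition and 1-a for each reversal.\<close>
definition path_prob :: "real \<Rightarrow> bool list \<Rightarrow> real" where
  "path_prob a es = (if es = [] then 1 else
     (1/2) * (\<Prod>i\<in>{i. Suc i < length es}. if es ! i = es ! Suc i then a else 1 - a))"

definition excursion :: "bool list \<Rightarrow> bool" where
  "excursion es \<longleftrightarrow> length es \<ge> 1 \<and> pos es (length es) = 0 \<and>
     (\<forall>j. 1 \<le> j \<and> j < length es \<longrightarrow> pos es j \<noteq> 0)"

definition num_runs :: "bool list \<Rightarrow> nat" where
  "num_runs es = (if es = [] then 0 else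
     Suc (card {i. Suc i < length es \<and> es ! i \<noteq> es ! Suc i}))"

text \<open>Number of short runs (runs consisting of a single step).\<close>
definition num_short_runs :: "bool list \<Rightarrow> nat" where
  "num_short_runs es = card {i. i < length es \<and>
      (i = 0 \<or> es ! (i - 1) \<noteq> es ! i) \<and>
      (Suc i = length es \<or> es ! Suc i \<noteq> es ! i)}"

definition height :: "bool list \<Rightarrow> int" where
  "height es = Max ((\<lambda>j. \<bar>pos es j\<bar>) ` {1..length es})"

text \<open>n-th coefficient (in z) of K = E{r^R y^V z^L}: E{r^R y^V ; L = n}.\<close>
definition K_coeff :: "real \<Rightarrow> real \<Rightarrow> real \<Rightarrow> nat \<Rightarrow> real" where
  "K_coeff a r y n = (\<Sum>es\<in>{es. length es = n \<and> excursion es}.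
      path_prob a es * r ^ num_runs es * y ^ num_short_runs es)"

definition K_fps :: "real \<Rightarrow> real \<Rightarrow> real \<Rightarrow> real fps" where
  "K_fps a r y = Abs_fps (K_coeff a r y)"

text \<open>Exact probability P(H <= N): by continuity from above, the limit of the
  probabilities of the events max_{1<=j<=min(n,L)} |X_j| <= N, which only depend on
  the first n increments.\<close>
definition bounded_upto :: "int \<Rightarrow> bool list \<Rightarrow> bool" where
  "bounded_upto N es \<longleftrightarrow> (\<forall>j. 1 \<le> j \<and> j \<le> length es \<and>
      (\<forall>i. 1 \<le> i \<and> i < j \<longrightarrow> pos es i \<noteq> 0) \<longrightarrow> \<bar>pos es j\<bar> \<le> N)"

definition prob_H_le :: "real \<Rightarrow> nat \<Rightarrow> real" where
  "prob_H_le a N = lim (\<lambda>n. \<Sum>es\<in>{es. length es = n \<and> bounded_upto (int N) es}. path_prob a es)"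

definition cond_coeff :: "real \<Rightarrow> real \<Rightarrow> real \<Rightarrow> nat \<Rightarrow> nat \<Rightarrow> real" where
  "cond_coeff a r y N n = (\<Sum>es\<in>{es. length es = n \<and> excursion es \<and> height es \<le> int N}.
      path_prob a es * r ^ num_runs es * y ^ num_short_runs es) / prob_H_le a N"

definition tau_fps :: "real \<Rightarrow> real \<Rightarrow> real \<Rightarrow> real fps" where
  "tau_fps a r y = 1 + fps_const ((1 - a)^2 * r^2 * y * (1 - y)) * fps_X^2"

definition x_fps :: "real \<Rightarrow> real \<Rightarrow> real \<Rightarrow> real fps" where
  "x_fps a r y = fps_const (a^2) * fps_X^2 * (tau_fps a r y)^2"

definition beta_fps :: "real \<Rightarrow> real \<Rightarrow> real \<Rightarrow> real fps" where
  "beta_fps a r y = 1 + fps_X^2 * (fps_const (a^2) - fps_const ((1 - a)^2 * r^2) *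
      (fps_const (y^2) + fps_const (a^2 * (1 - y)^2) * fps_X^2))"

text \<open>alpha_a = sqrt(beta_a^2 - 4 x_a), the square root with constant term 1.\<close>
definition alpha_fps :: "real \<Rightarrow> real \<Rightarrow> real \<Rightarrow> real fps" where
  "alpha_fps a r y = fps_radical (\<lambda>_ _. 1) 2 ((beta_fps a r y)^2 - 4 * x_fps a r y)"

end

theory Submission
  imports Defs
begin

text \<open>
  Reflecting negative excursions, K is the generating function of arches (excursions above 0).
  The weight r^R y^V P(path) of a path is a product of local factors: a for each repetition,
  (1 - a) r for each reversal and y for each short run. Removing the first and last step of an
  arch leaves a Dyck path, and a nonempty Dyck path splits at its first return to 0 into an arch
  followed by a Dyck path. Recording whether the cut points lie at reversals gives a closed
  polynomial system for the arch and Dyck series, whose elimination yields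
  (1 - a)^2 K^2 - (1 - a) (2 - beta) K + 1 - beta + x = 0. Since K has constant term 0,
  2 - beta - 2 (1 - a) K is the square root of beta^2 - 4 x with constant term 1.

  At r = y = 1 the same equation, summed over all coefficients with the Cauchy product,
  gives (1 - a)^2 (P(L < \<infinity>) - 1)^2 = 0. Hence P(H \<le> N) \<rightarrow> 1, and for N \<ge> n
  conditioning on H \<le> N only divides the n-th coefficient by P(H \<le> N).
\<close>

section \<open>Positions, arches and Dyck paths\<close>

lemma pos_0 [simp]: "pos es 0 = 0"
  by (simp add: pos_def)

lemma pos_Suc: "pos es (Suc j) = pos es j + stepv (es ! j)"
  by (simp add: pos_def)

lemma stepv_True [simp]: "stepv True = 1" and stepv_False [simp]: "stepv False = -1"
  by (simp_all add: stepv_def)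

lemma stepv_Not: "stepv (\<not> b) = - stepv b"
  by (simp add: stepv_def)

lemma pos_append_left: "j \<le> length A \<Longrightarrow> pos (A @ B) j = pos A j"
  unfolding pos_def by (rule sum.cong) (auto simp: nth_append)

lemma pos_append_right: "pos (A @ B) (length A + j) = pos A (length A) + pos B j"
  by (induction j) (auto simp: pos_Suc nth_append pos_append_left)

lemma pos_Cons: "pos (x # es) (Suc j) = stepv x + pos es j"
  using pos_append_right[of "[x]" es j] by (simp add: pos_def)

lemma pos_take: "j \<le> n \<Longrightarrow> pos (take n es) j = pos es j"
  by (cases "n \<le> length es") (auto simp: pos_def intro: sum.cong)

lemma pos_map_Not: "j \<le> length es \<Longrightarrow> pos (map Not es) j = - pos es j"
  by (simp add: pos_def stepv_Not sum_negf)

lemma abs_pos_le: "\<bar>pos es j\<bar> \<le> int j"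
  by (induction j) (auto simp: pos_Suc stepv_def)

definition arch :: "bool list \<Rightarrow> bool" where
  "arch A \<longleftrightarrow> A \<noteq> [] \<and> pos A (length A) = 0 \<and> (\<forall>j. 1 \<le> j \<and> j < length A \<longrightarrow> pos A j > 0)"

definition dyck :: "bool list \<Rightarrow> bool" where
  "dyck q \<longleftrightarrow> (\<forall>j \<le> length q. pos q j \<ge> 0) \<and> pos q (length q) = 0"

lemma dyck_Nil: "dyck []"
  by (simp add: dyck_def)

lemma pos_wrap: "j \<le> length q \<Longrightarrow> pos (True # q @ [False]) (Suc j) = 1 + pos q j"
  by (simp add: pos_Cons pos_append_left)

lemma arch_wrap:
  assumes "dyck q"
  shows "arch (True # q @ [False])"
  unfolding arch_def
proof (intro conjI allI impI)
  show "pos (True # q @ [False]) (length (True # q @ [False])) = 0"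
    using pos_Cons[of True "q @ [False]" "Suc (length q)"] pos_append_right[of q "[False]" 1] assms
    by (simp add: dyck_def pos_Suc[of "[False]"])
  fix j assume "1 \<le> j \<and> j < length (True # q @ [False])"
  then obtain i where "j = Suc i" "i \<le> length q"
    by (cases j) auto
  moreover have "0 \<le> pos q i"
    using assms \<open>i \<le> length q\<close> by (simp add: dyck_def)
  ultimately show "0 < pos (True # q @ [False]) j"
    using pos_wrap by simp
qed simp

lemma arch_length_ge_2:
  assumes "arch A"
  shows "length A \<ge> 2"
proof (rule ccontr)
  assume "\<not> 2 \<le> length A"
  moreover have "length A > 0"
    using assms by (simp add: arch_def)
  ultimately have "length A = 1"
    by linarith
  with assms show False
    using pos_Suc[of A 0] by (simp add: arch_def stepv_def split: if_splits)
qed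

lemma arch_unwrap:
  assumes "arch A"
  obtains q where "A = True # q @ [False]" and "dyck q"
proof -
  have z: "pos A (length A) = 0" and p: "\<And>j. 1 \<le> j \<Longrightarrow> j < length A \<Longrightarrow> pos A j > 0"
    using assms unfolding arch_def by auto
  obtain m where m: "length A = Suc (Suc m)"
    using arch_length_ge_2[OF assms] by (metis add_2_eq_Suc le_Suc_ex)
  have first: "A ! 0 = True"
    using p[of 1] m pos_Suc[of A 0] by (simp add: stepv_def split: if_splits)
  have "pos A (Suc (Suc m)) = pos A (Suc m) + stepv (A ! Suc m)"
    by (rule pos_Suc)
  then have last: "A ! Suc m = False" and top: "pos A (Suc m) = 1"
    using z m p[of "Suc m"] by (auto simp: stepv_def split: if_splits)
  define q where "q = take m (tl A)"
  have lq: "length q = m"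
    using m by (simp add: q_def)
  have A: "A = True # q @ [False]"
  proof (rule nth_equalityI)
    show "length A = length (True # q @ [False])"
      using m lq by simp
    fix i assume "i < length A"
    then show "A ! i = (True # q @ [False]) ! i"
      using m first last lq by (cases i) (auto simp: q_def nth_append nth_tl less_Suc_eq)
  qed
  have "dyck q"
    unfolding dyck_def
  proof (intro conjI allI impI)
    fix j assume j: "j \<le> length q"
    have "pos A (Suc j) > 0"
      using p[of "Suc j"] j lq m by simp
    then show "0 \<le> pos q j"
      using pos_wrap[OF j] A by simp
  next
    show "pos q (length q) = 0"
      using pos_wrap[of m q] top A lq by simp
  qed
  with A show ?thesis
    using that by blast
qed

lemma arch_iff_wrap: "arch A \<longleftrightarrow> (\<exists>q. A = True # q @ [False] \<and> dyck q)"
  using arch_unwrap arch_wrap by metis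

lemma excursion_up_pos:
  assumes "excursion es" "es ! 0 = True" "1 \<le> j" "j < length es"
  shows "pos es j > 0"
  using assms(3,4)
proof (induction j rule: dec_induct)
  case base
  then show ?case
    using pos_Suc[of es 0] assms(2) by simp
next
  case (step k)
  have "pos es (Suc k) \<noteq> 0"
    using assms(1) step unfolding excursion_def by auto
  moreover have "pos es (Suc k) \<ge> pos es k - 1"
    using pos_Suc[of es k] by (simp add: stepv_def)
  ultimately show ?case
    using step by auto
qed

lemma arch_iff_excursion: "arch es \<longleftrightarrow> excursion es \<and> es ! 0 = True"
proof
  assume "arch es"
  then show "excursion es \<and> es ! 0 = True"
    using arch_iff_wrap[of es] by (auto simp: arch_def excursion_def)
next
  assume "excursion es \<and> es ! 0 = True"
  then show "arch es"
    using excursion_up_pos[of es] by (auto simp: arch_def excursion_def)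
qed

lemma excursion_map_Not: "excursion (map Not es) \<longleftrightarrow> excursion es"
  by (auto simp: excursion_def pos_map_Not)

lemma excursion_iff_arch: "excursion es \<longleftrightarrow> arch es \<or> arch (map Not es)"
proof
  assume e: "excursion es"
  then have "es \<noteq> []"
    by (auto simp: excursion_def)
  then show "arch es \<or> arch (map Not es)"
    using e arch_iff_excursion[of es] arch_iff_excursion[of "map Not es"] excursion_map_Not
    by (cases "es ! 0") auto
next
  assume "arch es \<or> arch (map Not es)"
  then show "excursion es"
    using arch_iff_excursion excursion_map_Not by blast
qed

lemma dyck_hd_last:
  assumes "dyck q" "q \<noteq> []"
  shows "hd q = True" "last q = False"
proof -
  have nn: "\<And>j. j \<le> length q \<Longrightarrow> pos q j \<ge> 0" and z: "pos q (length q) = 0"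
    using assms unfolding dyck_def by auto
  have "pos q 1 \<ge> 0"
    using nn[of 1] assms(2) by (cases q) auto
  then show "hd q = True"
    using pos_Suc[of q 0] assms(2) by (auto simp: hd_conv_nth stepv_def split: if_splits)
  obtain m where m: "length q = Suc m"
    using assms(2) by (cases q) auto
  have "pos q m \<ge> 0"
    using nn[of m] m by simp
  then show "last q = False"
    using pos_Suc[of q m] z m assms(2) by (auto simp: last_conv_nth stepv_def split: if_splits)
qed

lemma arch_nonneg:
  assumes "arch A" "j \<le> length A"
  shows "pos A j \<ge> 0"
proof -
  consider "j = 0" | "j = length A" | "1 \<le> j \<and> j < length A"
    using assms(2) by linarith
  then show ?thesis
    using assms(1) unfolding arch_def by cases auto
qed

lemma arch_imp_dyck: "arch A \<Longrightarrow> dyck A"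
  using arch_nonneg by (auto simp: arch_def dyck_def)

lemma dyck_append:
  assumes "arch A" "dyck B"
  shows "dyck (A @ B)"
  unfolding dyck_def
proof (intro conjI allI impI)
  fix j assume j: "j \<le> length (A @ B)"
  show "0 \<le> pos (A @ B) j"
  proof (cases "j \<le> length A")
    case True
    then show ?thesis
      using pos_append_left arch_nonneg[OF assms(1)] by simp
  next
    case False
    then obtain k where "j = length A + k"
      by (metis le_add_diff_inverse nat_le_linear)
    then show ?thesis
      using pos_append_right[of A B k] assms j unfolding arch_def dyck_def by auto
  qed
next
  show "pos (A @ B) (length (A @ B)) = 0"
    using pos_append_right[of A B "length B"] assms unfolding arch_def dyck_def by auto
qed

lemma arch_append_not_arch:
  assumes "arch A" "B \<noteq> []"
  shows "\<not> arch (A @ B)"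
proof
  assume "arch (A @ B)"
  moreover have "pos (A @ B) (length A) = 0"
    using pos_append_left[of "length A" A B] assms(1) by (simp add: arch_def)
  moreover have "1 \<le> length A"
    using assms(1) by (simp add: arch_def Suc_le_eq)
  ultimately show False
    using assms(2) unfolding arch_def by fastforce
qed

lemma arch_prefix_unique:
  assumes "arch A1" "arch A2" "A1 @ B1 = A2 @ B2"
  shows "A1 = A2"
proof -
  have "\<not> length A1 < length A2"
    if "arch A1" "arch A2" "A1 @ B1 = A2 @ B2" for A1 A2 B1 B2
  proof
    assume lt: "length A1 < length A2"
    then have "A1 = take (length A1) A2"
      using that(3) by (simp add: append_eq_append_conv_if)
    then have "A2 = A1 @ drop (length A1) A2"
      by (metis append_take_drop_id)
    moreover have "drop (length A1) A2 \<noteq> []"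
      using lt by simp
    ultimately show False
      using arch_append_not_arch[OF that(1)] that(2) by metis
  qed
  then have "length A1 = length A2"
    using assms by (metis linorder_neqE_nat)
  then show ?thesis
    using assms(3) by (metis append_eq_append_conv)
qed

lemma dyck_first_arch:
  assumes "dyck q" "q \<noteq> []"
  obtains A B where "q = A @ B" "arch A" "dyck B"
proof -
  have nn: "\<And>j. j \<le> length q \<Longrightarrow> pos q j \<ge> 0" and z: "pos q (length q) = 0"
    using assms unfolding dyck_def by auto
  define k where "k = (LEAST k. 1 \<le> k \<and> pos q k = 0)"
  have ex: "1 \<le> length q \<and> pos q (length q) = 0"
    using z assms(2) by (cases q) auto
  have k1: "1 \<le> k" and kz: "pos q k = 0"
    using LeastI[of "\<lambda>k. 1 \<le> k \<and> pos q k = 0", OF ex] by (auto simp: k_def)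
  have kl: "k \<le> length q"
    using Least_le[of "\<lambda>k. 1 \<le> k \<and> pos q k = 0", OF ex] by (simp add: k_def)
  have nz: "\<And>j. 1 \<le> j \<Longrightarrow> j < k \<Longrightarrow> pos q j \<noteq> 0"
    using not_less_Least[of _ "\<lambda>k. 1 \<le> k \<and> pos q k = 0"] by (auto simp: k_def)
  define A where "A = take k q"
  define B where "B = drop k q"
  have lA: "length A = k"
    using kl by (simp add: A_def)
  have split: "pos q (k + j) = pos A k + pos B j" for j
    using pos_append_right[of A B j] lA by (simp add: A_def B_def)
  have "arch A"
    unfolding arch_def
  proof (intro conjI allI impI)
    show "A \<noteq> []" "pos A (length A) = 0"
      using lA k1 kz by (auto simp: A_def pos_take)
    fix j assume "1 \<le> j \<and> j < length A"
    then show "0 < pos A j"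
      using nz[of j] nn[of j] lA kl by (simp add: A_def pos_take)
  qed
  moreover have "dyck B"
    unfolding dyck_def
  proof (intro conjI allI impI)
    fix j assume "j \<le> length B"
    then show "0 \<le> pos B j"
      using split[of j] nn[of "k + j"] kl kz lA by (simp add: A_def B_def pos_take)
  next
    show "pos B (length B) = 0"
      using split[of "length B"] z kl kz lA by (simp add: A_def B_def pos_take)
  qed
  ultimately show ?thesis
    using that[of A B] by (simp add: A_def B_def)
qed

lemma dyck_not_arch_iff:
  "dyck q \<and> q \<noteq> [] \<and> \<not> arch q \<longleftrightarrow> (\<exists>A B. q = A @ B \<and> arch A \<and> dyck B \<and> B \<noteq> [])"
proof
  assume q: "dyck q \<and> q \<noteq> [] \<and> \<not> arch q"
  then obtain A B where "q = A @ B" "arch A" "dyck B"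
    using dyck_first_arch by blast
  moreover have "B \<noteq> []"
    using q calculation by auto
  ultimately show "\<exists>A B. q = A @ B \<and> arch A \<and> dyck B \<and> B \<noteq> []"
    by blast
next
  assume "\<exists>A B. q = A @ B \<and> arch A \<and> dyck B \<and> B \<noteq> []"
  then show "dyck q \<and> q \<noteq> [] \<and> \<not> arch q"
    using dyck_append arch_append_not_arch by auto
qed

lemma map_Not_map_Not: "map Not (map Not es) = es"
  by (induction es) auto

lemma excursions_eq_arches_reflected:
  "{es. length es = n \<and> excursion es} =
    {A. length A = n \<and> arch A} \<union> map Not ` {A. length A = n \<and> arch A}"
proof (intro equalityI subsetI)
  fix es assume "es \<in> {es. length es = n \<and> excursion es}"
  then have len: "length (map Not es) = n" and "arch es \<or> arch (map Not es)"
    using excursion_iff_arch by auto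
  moreover have "es \<in> map Not ` {A. length A = n \<and> arch A}" if "arch (map Not es)"
    using that len by (metis (mono_tags) image_eqI map_Not_map_Not mem_Collect_eq)
  ultimately show "es \<in> {A. length A = n \<and> arch A} \<union> map Not ` {A. length A = n \<and> arch A}"
    by auto
next
  fix es assume "es \<in> {A. length A = n \<and> arch A} \<union> map Not ` {A. length A = n \<and> arch A}"
  then consider "length es = n" "arch es" | A where "es = map Not A" "length A = n" "arch A"
    by blast
  then show "es \<in> {es. length es = n \<and> excursion es}"
    by cases (simp_all add: excursion_iff_arch comp_def)
qed

lemma arches_reflected_disjoint:
  "{A. length A = n \<and> arch A} \<inter> map Not ` {A. length A = n \<and> arch A} = {}"
proof -
  have "\<not> (arch A \<and> arch (map Not A))" for A
    using arch_iff_wrap[of A] arch_iff_wrap[of "map Not A"] by (cases A) auto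
  then show ?thesis
    by auto
qed

lemma finite_lists_length: "finite {xs :: 'a::finite list. length xs = n \<and> P xs}"
  by (rule finite_subset[OF _ finite_lists_length_eq[of "UNIV :: 'a set" n]]) auto

lemma finite_lists_length_UNIV: "finite {xs :: 'a::finite list. length xs = n}"
  using finite_lists_length[of n "\<lambda>_. True"] by simp

lemma sum_unique_append_decomp:
  fixes g :: "'a::finite list \<Rightarrow> 'b::comm_monoid_add"
  assumes R: "\<And>xs. R xs \<longleftrightarrow> (\<exists>A B. xs = A @ B \<and> P A \<and> Q B)"
    and unique: "\<And>A1 B1 A2 B2. P A1 \<Longrightarrow> P A2 \<Longrightarrow> A1 @ B1 = A2 @ B2 \<Longrightarrow> A1 = A2"
  shows "(\<Sum>xs\<in>{xs. length xs = n \<and> R xs}. g xs) =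
    (\<Sum>i\<le>n. \<Sum>A\<in>{A. length A = i \<and> P A}. \<Sum>B\<in>{B. length B = n - i \<and> Q B}. g (A @ B))"
proof -
  define S where "S i = {A. length A = i \<and> P A} \<times> {B. length B = n - i \<and> Q B}" for i
  have bij: "bij_betw (\<lambda>(A, B). A @ B) (\<Union>i\<le>n. S i) {xs. length xs = n \<and> R xs}"
    unfolding bij_betw_def
  proof
    show "inj_on (\<lambda>(A, B). A @ B) (\<Union>i\<le>n. S i)"
      by (auto simp: inj_on_def S_def dest: unique)
    show "(\<lambda>(A, B). A @ B) ` (\<Union>i\<le>n. S i) = {xs. length xs = n \<and> R xs}"
    proof (intro equalityI subsetI)
      fix xs assume "xs \<in> (\<lambda>(A, B). A @ B) ` (\<Union>i\<le>n. S i)"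
      then show "xs \<in> {xs. length xs = n \<and> R xs}"
        using R by (auto simp: S_def)
    next
      fix xs assume "xs \<in> {xs. length xs = n \<and> R xs}"
      then obtain A B where "xs = A @ B" "P A" "Q B" "length xs = n"
        using R by blast
      then show "xs \<in> (\<lambda>(A, B). A @ B) ` (\<Union>i\<le>n. S i)"
        unfolding S_def by (intro image_eqI[of _ _ "(A, B)"]) auto
    qed
  qed
  have "(\<Sum>i\<le>n. \<Sum>A\<in>{A. length A = i \<and> P A}. \<Sum>B\<in>{B. length B = n - i \<and> Q B}. g (A @ B))
      = (\<Sum>i\<le>n. \<Sum>p\<in>S i. g (case p of (A, B) \<Rightarrow> A @ B))"
    unfolding S_def by (simp add: sum.cartesian_product split_def)
  also have "\<dots> = (\<Sum>p\<in>(\<Union>i\<le>n. S i). g (case p of (A, B) \<Rightarrow> A @ B))"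
    by (rule sum.UNION_disjoint[symmetric]) (auto simp: S_def finite_lists_length)
  also have "\<dots> = (\<Sum>xs\<in>{xs. length xs = n \<and> R xs}. g xs)"
    using bij by (rule sum.reindex_bij_betw)
  finally show ?thesis ..
qed

section \<open>Run statistics of path segments\<close>

text \<open>Short runs of a segment cut out of a longer path: the flag lb (rb) records whether a
  reversal precedes (follows) the segment, that is, whether a run of the whole path begins at
  its left end (ends at its right end).\<close>

definition num_short_runs_within :: "bool \<Rightarrow> bool \<Rightarrow> bool list \<Rightarrow> nat" where
  "num_short_runs_within lb rb es = card {i. i < length es \<and>
     (if i = 0 then lb else es ! (i - 1) \<noteq> es ! i) \<and>
     (if Suc i = length es then rb else es ! Suc i \<noteq> es ! i)}"

lemma num_short_runs_eq_within: "num_short_runs es = num_short_runs_within True True es"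
  unfolding num_short_runs_def num_short_runs_within_def
  by (rule arg_cong[where f = card]) auto

lemma card_less_Suc_Collect:
  "card {i. i < Suc n \<and> C i} = (if C 0 then 1 else 0) + card {i. i < n \<and> C (Suc i)}"
proof -
  have "{i. i < Suc n \<and> C i} = {i::nat. i = 0 \<and> C 0} \<union> Suc ` {i. i < n \<and> C (Suc i)}"
    by (auto simp: image_iff less_Suc_eq_0_disj)
  moreover have "card ({i::nat. i = 0 \<and> C 0} \<union> Suc ` {i. i < n \<and> C (Suc i)}) =
      card {i::nat. i = 0 \<and> C 0} + card (Suc ` {i. i < n \<and> C (Suc i)})"
    by (rule card_Un_disjoint) auto
  moreover have "card (Suc ` {i. i < n \<and> C (Suc i)}) = card {i. i < n \<and> C (Suc i)}"
    by (rule card_image) auto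
  ultimately show ?thesis
    by auto
qed

lemma num_short_runs_within_Cons:
  assumes "es \<noteq> []"
  shows "num_short_runs_within lb rb (x # es) =
    (if lb \<and> hd es \<noteq> x then 1 else 0) + num_short_runs_within (hd es \<noteq> x) rb es"
proof -
  obtain n where n: "length es = Suc n"
    using assms by (cases es) auto
  have "{i. i < n \<and> (if Suc i = 0 then lb else (x # es) ! (Suc i - 1) \<noteq> (x # es) ! Suc i) \<and>
      (if Suc (Suc i) = Suc (Suc n) then rb else (x # es) ! Suc (Suc i) \<noteq> (x # es) ! Suc i)}
    = {i. i < n \<and> (if i = 0 then hd es \<noteq> x else es ! (i - 1) \<noteq> es ! i) \<and>
      (if Suc i = Suc n then rb else es ! Suc i \<noteq> es ! i)}"
    by (rule Collect_cong) (auto simp: hd_conv_nth assms nth_Cons split: nat.split)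
  then show ?thesis
    unfolding num_short_runs_within_def using n assms
    by (simp only: length_Cons card_less_Suc_Collect) (simp add: hd_conv_nth)
qed

lemma num_short_runs_within_single: "num_short_runs_within lb rb [x] = (if lb \<and> rb then 1 else 0)"
  unfolding num_short_runs_within_def by (auto simp: card_less_Suc_Collect[where n = 0, simplified])

lemma num_runs_Cons:
  assumes "es \<noteq> []"
  shows "num_runs (x # es) = num_runs es + (if x = hd es then 0 else 1)"
proof -
  obtain n where n: "length es = Suc n"
    using assms by (cases es) auto
  have "{i. Suc i < length (x # es) \<and> (x # es) ! i \<noteq> (x # es) ! Suc i} =
      {i. i < Suc n \<and> (x # es) ! i \<noteq> es ! i}"
    using n by auto
  moreover have "{i. Suc i < length es \<and> es ! i \<noteq> es ! Suc i} = {i. i < n \<and> es ! i \<noteq> es ! Suc i}"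
    using n by auto
  ultimately show ?thesis
    using assms unfolding num_runs_def
    by (simp only: card_less_Suc_Collect[of n] length_Cons) (simp add: hd_conv_nth)
qed

lemma path_prob_Cons:
  assumes "es \<noteq> []"
  shows "path_prob a (x # es) = path_prob a es * (if x = hd es then a else 1 - a)"
proof -
  obtain n where n: "length es = Suc n"
    using assms by (cases es) auto
  have "{i. Suc i < length (x # es)} = {..<Suc n}" "{i. Suc i < length es} = {..<n}"
    using n by auto
  moreover have "(\<Prod>i<Suc n. if (x # es) ! i = (x # es) ! Suc i then a else 1 - a) =
      (if x = es ! 0 then a else 1 - a) * (\<Prod>i<n. if es ! i = es ! Suc i then a else 1 - a)"
    by (subst prod.lessThan_Suc_shift) simp
  ultimately show ?thesis
    using assms unfolding path_prob_def by (simp add: hd_conv_nth mult_ac)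
qed

section \<open>Eliminating the arch system\<close>

text \<open>The unknowns stand for the arch and Dyck series with boundary flags t(rue) and f(alse).
  With c = 1 - a the two Dyck equations give (Dff - Aff) (1 - c Att) = c Atf^2, and substituting
  the arch equations leaves a quadratic equation for Att alone.\<close>

lemma arch_system_quadratic:
  fixes a r y z Att Atf Aff Dtf Dff :: "'a::comm_ring_1"
  assumes Att: "Att = z^2 * ((1 - a) * r^2 * y^2 + a^2 * Dff)"
    and Atf: "Atf = z^2 * ((1 - a) * r^2 * y + a^2 * Dff)"
    and Aff: "Aff = z^2 * ((1 - a) * r^2 + a^2 * Dff)"
    and Dtf: "Dtf = Atf + (1 - a) * Att * Dtf"
    and Dff: "Dff = Aff + (1 - a) * Atf * Dtf"
  shows "(1 - a)^2 * Att^2 - (1 - a) * (2 - (1 + z^2 * (a^2 - (1 - a)^2 * r^2 * (y^2 + a^2 * (1 - y)^2 * z^2)))) * Att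
     + 1 - (1 + z^2 * (a^2 - (1 - a)^2 * r^2 * (y^2 + a^2 * (1 - y)^2 * z^2)))
     + a^2 * z^2 * (1 + (1 - a)^2 * r^2 * y * (1 - y) * z^2)^2 = 0"
    (is "?lhs = 0")
proof -
  have "(Dff - Aff) * (1 - (1 - a) * Att) = (1 - a) * Atf * (Dtf * (1 - (1 - a) * Att))"
    using Dff by (simp add: mult.assoc)
  also have "Dtf * (1 - (1 - a) * Att) = Atf"
    using Dtf by (simp add: algebra_simps)
  finally have elim: "(Dff - Aff) * (1 - (1 - a) * Att) - (1 - a) * Atf^2 = 0"
    by (simp add: power2_eq_square mult.assoc)
  have "?lhs = - (1 - a) * a^2 * z^2 * ((Dff - Aff) * (1 - (1 - a) * Att) - (1 - a) * Atf^2)"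
    unfolding Att Atf Aff by (simp add: algebra_simps power2_eq_square)
  then show ?thesis
    using elim by simp
qed

lemma fps_quadratic_root_radical:
  fixes C K B X :: "'a::field_char_0 fps"
  assumes quad: "C^2 * K^2 - C * (2 - B) * K + 1 - B + X = 0"
    and "fps_nth K 0 = 0" "fps_nth B 0 = 1" "fps_nth X 0 = 0"
  shows "2 - B - 2 * C * K = fps_radical (\<lambda>_ _. 1) 2 (B^2 - 4 * X)"
proof -
  have "(2 - B - 2 * C * K)^2 = B^2 - 4 * X + 4 * (C^2 * K^2 - C * (2 - B) * K + 1 - B + X)"
    by (simp add: algebra_simps power2_eq_square)
  with quad have sq: "(2 - B - 2 * C * K)^2 = B^2 - 4 * X"
    by simp
  have "fps_nth (B^2 - 4 * X) 0 = 1" "fps_nth (2 - B - 2 * C * K) 0 = 1"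
    using assms(2-4) by (simp_all add: power2_eq_square mult.assoc)
  then show ?thesis
    using radical_unique[of "\<lambda>_ _. 1" 1 "B^2 - 4 * X" "2 - B - 2 * C * K", unfolded Suc_1] sq
    by simp
qed

lemma one_minus_fps_const: "1 - fps_const c = fps_const (1 - (c :: 'a::ring_1))"
  by (simp add: fps_eq_iff)

section \<open>Weights of arches and Dyck paths\<close>

context
  fixes a r y :: real
begin

text \<open>The boundary flags are those of num_short_runs_within. The factor r of the first run
  is left out, so that weights of segments meeting at a reversal simply multiply.\<close>

fun run_weight :: "bool \<Rightarrow> bool \<Rightarrow> bool list \<Rightarrow> real" where
  "run_weight lb rb [] = 1"
| "run_weight lb rb [x] = (if lb \<and> rb then y else 1)"
| "run_weight lb rb (x # x' # es) = (if lb \<and> x' \<noteq> x then y else 1) *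
      (if x = x' then a else (1 - a) * r) * run_weight (x' \<noteq> x) rb (x' # es)"

lemma path_prob_run_statistics:
  "es \<noteq> [] \<Longrightarrow>
    path_prob a es * r ^ num_runs es * y ^ num_short_runs_within lb rb es = r * run_weight lb rb es / 2"
proof (induction es arbitrary: lb)
  case Nil
  then show ?case by simp
next
  case (Cons x es)
  show ?case
  proof (cases es)
    case Nil
    then show ?thesis
      by (simp add: path_prob_def num_runs_def num_short_runs_within_single)
  next
    case (Cons x' es')
    then have "path_prob a (x # es) * r ^ num_runs (x # es) * y ^ num_short_runs_within lb rb (x # es)
       = (path_prob a es * r ^ num_runs es * y ^ num_short_runs_within (x' \<noteq> x) rb es) *
         ((if x = x' then a else 1 - a) * r ^ (if x = x' then 0 else 1) * y ^ (if lb \<and> x' \<noteq> x then 1 else 0))"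
      by (simp add: path_prob_Cons num_runs_Cons num_short_runs_within_Cons power_add mult_ac)
    also have "\<dots> = r * run_weight lb rb (x # es) / 2"
      using Cons.IH[of "x' \<noteq> x"] Cons by auto
    finally show ?thesis .
  qed
qed

lemma run_weight_append:
  "A \<noteq> [] \<Longrightarrow> B \<noteq> [] \<Longrightarrow> run_weight lb rb (A @ B) =
     run_weight lb (hd B \<noteq> last A) A * (if last A = hd B then a else (1 - a) * r) *
     run_weight (hd B \<noteq> last A) rb B"
proof (induction A arbitrary: lb)
  case Nil
  then show ?case by simp
next
  case (Cons x A)
  then show ?case
    by (cases A; cases B) (auto simp: mult_ac)
qed

lemma run_weight_map_Not: "run_weight lb rb (map Not es) = run_weight lb rb es"
  by (induction lb rb es rule: run_weight.induct) auto

lemma run_weight_append_arch: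
  assumes "arch A" "dyck B" "B \<noteq> []"
  shows "r * run_weight lb rb (A @ B) = (1 - a) * (r * run_weight lb True A) * (r * run_weight True rb B)"
proof -
  obtain q where "A = True # q @ [False]"
    using arch_unwrap[OF assms(1)] .
  moreover have "hd B = True"
    using dyck_hd_last[OF assms(2,3)] by simp
  ultimately show ?thesis
    using run_weight_append[of A B lb rb] assms(3) by simp
qed

lemma run_weight_wrap:
  assumes "dyck q" "q \<noteq> []"
  shows "run_weight lb rb (True # q @ [False]) = a^2 * run_weight False False q"
proof -
  have "hd q = True" "last q = False"
    using dyck_hd_last[OF assms] by auto
  then show ?thesis
    using run_weight_append[of "[True]" "q @ [False]" lb rb] run_weight_append[of q "[False]" False rb] assms(2)
    by (simp add: power2_eq_square)
qed

definition arch_gf :: "bool \<Rightarrow> bool \<Rightarrow> real fps" where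
  "arch_gf lb rb = Abs_fps (\<lambda>n. \<Sum>A\<in>{A. length A = n \<and> arch A}. r * run_weight lb rb A)"

definition dyck_gf :: "bool \<Rightarrow> bool \<Rightarrow> real fps" where
  "dyck_gf lb rb = Abs_fps (\<lambda>n. \<Sum>q\<in>{q. length q = n \<and> dyck q \<and> q \<noteq> []}. r * run_weight lb rb q)"

text \<open>By the reflection symmetry every excursion is an arch or a reflected arch, and the
  initial probability 1/2 cancels the factor 2.\<close>

lemma K_fps_eq_arch_gf: "K_fps a r y = arch_gf True True"
proof (rule fps_ext)
  fix n
  let ?arches = "{A. length A = n \<and> arch A}"
  let ?w = "\<lambda>es. r * run_weight True True es / 2"
  note split = excursions_eq_arches_reflected[of n] and disj = arches_reflected_disjoint[of n]
  have "sum ?w (map Not ` ?arches) = sum ?w ?arches"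
    by (subst sum.reindex) (auto simp: inj_on_def run_weight_map_Not)
  moreover have "K_coeff a r y n = sum ?w {es. length es = n \<and> excursion es}"
    unfolding K_coeff_def num_short_runs_eq_within
  proof (rule sum.cong[OF refl])
    fix es assume "es \<in> {es. length es = n \<and> excursion es}"
    then have "es \<noteq> []"
      by (auto simp: excursion_def)
    then show "path_prob a es * r ^ num_runs es * y ^ num_short_runs_within True True es = ?w es"
      by (rule path_prob_run_statistics)
  qed
  ultimately have "K_coeff a r y n = 2 * sum ?w ?arches"
    unfolding split by (simp add: sum.union_disjoint finite_lists_length disj)
  then show "fps_nth (K_fps a r y) n = fps_nth (arch_gf True True) n"
    by (simp add: K_fps_def arch_gf_def sum_divide_distrib[symmetric])
qed

lemma arch_gf_nth_less_2: "n < 2 \<Longrightarrow> fps_nth (arch_gf lb rb) n = 0"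
  unfolding arch_gf_def fps_nth_Abs_fps using arch_length_ge_2 by (intro sum.neutral) fastforce

lemma arch_gf_nth_Suc_Suc:
  "fps_nth (arch_gf lb rb) (Suc (Suc m)) =
    (if m = 0 then (1 - a) * r^2 * (if lb then y else 1) * (if rb then y else 1) else 0)
    + a^2 * fps_nth (dyck_gf False False) m"
proof -
  have "{A. length A = Suc (Suc m) \<and> arch A} = (\<lambda>q. True # q @ [False]) ` {q. length q = m \<and> dyck q}"
    using arch_iff_wrap by auto
  then have "fps_nth (arch_gf lb rb) (Suc (Suc m)) =
      (\<Sum>q\<in>{q. length q = m \<and> dyck q}. r * run_weight lb rb (True # q @ [False]))"
    unfolding arch_gf_def by (simp add: sum.reindex inj_on_def)
  also have "\<dots> = (if m = 0 then (1 - a) * r^2 * (if lb then y else 1) * (if rb then y else 1) else 0)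
    + a^2 * fps_nth (dyck_gf False False) m"
  proof (cases "m = 0")
    case True
    then have "{q. length q = m \<and> dyck q} = {[]}" "{q. length q = m \<and> dyck q \<and> q \<noteq> []} = {}"
      using dyck_Nil by auto
    then show ?thesis
      using True by (simp add: dyck_gf_def power2_eq_square)
  next
    case False
    then have "{q. length q = m \<and> dyck q} = {q. length q = m \<and> dyck q \<and> q \<noteq> []}"
      by auto
    then show ?thesis
      using False by (simp add: dyck_gf_def run_weight_wrap sum_distrib_left mult_ac)
  qed
  finally show ?thesis .
qed

lemma arch_gf_eq:
  "arch_gf lb rb = fps_X^2 * (fps_const ((1 - a) * r^2 * (if lb then y else 1) * (if rb then y else 1))
     + fps_const (a^2) * dyck_gf False False)"
proof (rule fps_ext)
  fix n
  show "fps_nth (arch_gf lb rb) n = fps_nth (fps_X^2 * (fps_const ((1 - a) * r^2 *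
      (if lb then y else 1) * (if rb then y else 1)) + fps_const (a^2) * dyck_gf False False)) n"
  proof (cases "n < 2")
    case True
    then show ?thesis
      by (simp add: arch_gf_nth_less_2 fps_X_power_mult_nth)
  next
    case False
    then obtain m where "n = Suc (Suc m)"
      by (metis add_2_eq_Suc le_Suc_ex not_less)
    then show ?thesis
      by (simp add: arch_gf_nth_Suc_Suc fps_X_power_mult_nth)
  qed
qed

lemma arch_gf_False_True: "arch_gf False True = arch_gf True False"
  by (simp add: arch_gf_eq)

lemma dyck_gf_nth:
  "fps_nth (dyck_gf lb rb) n = fps_nth (arch_gf lb rb) n +
     (1 - a) * (\<Sum>i\<le>n. fps_nth (arch_gf lb True) i * fps_nth (dyck_gf True rb) (n - i))"
proof -
  let ?w = "\<lambda>lb rb es. r * run_weight lb rb es"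
  let ?D = "\<lambda>m. {B. length B = m \<and> dyck B \<and> B \<noteq> []}"
  have split: "{q. length q = n \<and> dyck q \<and> q \<noteq> []} =
      {q. length q = n \<and> arch q} \<union> {q. length q = n \<and> (dyck q \<and> q \<noteq> [] \<and> \<not> arch q)}"
    using arch_imp_dyck by (auto simp: arch_def)
  have "fps_nth (dyck_gf lb rb) n = fps_nth (arch_gf lb rb) n +
      (\<Sum>q\<in>{q. length q = n \<and> (dyck q \<and> q \<noteq> [] \<and> \<not> arch q)}. ?w lb rb q)"
    unfolding dyck_gf_def arch_gf_def fps_nth_Abs_fps split
    by (rule sum.union_disjoint) (auto simp: finite_lists_length)
  also have "(\<Sum>q\<in>{q. length q = n \<and> (dyck q \<and> q \<noteq> [] \<and> \<not> arch q)}. ?w lb rb q) =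
      (\<Sum>i\<le>n. \<Sum>A\<in>{A. length A = i \<and> arch A}. \<Sum>B\<in>?D (n - i). ?w lb rb (A @ B))"
  proof (rule sum_unique_append_decomp)
    show "dyck q \<and> q \<noteq> [] \<and> \<not> arch q \<longleftrightarrow> (\<exists>A B. q = A @ B \<and> arch A \<and> dyck B \<and> B \<noteq> [])" for q
      by (rule dyck_not_arch_iff)
  qed (rule arch_prefix_unique)
  also have "\<dots> = (\<Sum>i\<le>n. (1 - a) * (fps_nth (arch_gf lb True) i * fps_nth (dyck_gf True rb) (n - i)))"
  proof (rule sum.cong[OF refl])
    fix i
    have "(\<Sum>A\<in>{A. length A = i \<and> arch A}. \<Sum>B\<in>?D (n - i). ?w lb rb (A @ B)) =
        (\<Sum>A\<in>{A. length A = i \<and> arch A}. \<Sum>B\<in>?D (n - i). (1 - a) * (?w lb True A * ?w True rb B))"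
      by (intro sum.cong refl) (simp add: run_weight_append_arch mult.assoc)
    also have "\<dots> = (1 - a) * ((\<Sum>A\<in>{A. length A = i \<and> arch A}. ?w lb True A) * (\<Sum>B\<in>?D (n - i). ?w True rb B))"
      by (subst sum_product) (simp add: sum_distrib_left)
    finally show "(\<Sum>A\<in>{A. length A = i \<and> arch A}. \<Sum>B\<in>?D (n - i). ?w lb rb (A @ B)) =
        (1 - a) * (fps_nth (arch_gf lb True) i * fps_nth (dyck_gf True rb) (n - i))"
      by (simp add: arch_gf_def dyck_gf_def)
  qed
  finally show ?thesis
    by (simp add: sum_distrib_left)
qed

lemma dyck_gf_eq:
  "dyck_gf lb rb = arch_gf lb rb + fps_const (1 - a) * arch_gf lb True * dyck_gf True rb"
proof (rule fps_ext)
  fix n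
  have "fps_nth (fps_const (1 - a) * arch_gf lb True * dyck_gf True rb) n =
      (1 - a) * (\<Sum>i\<le>n. fps_nth (arch_gf lb True) i * fps_nth (dyck_gf True rb) (n - i))"
    by (subst mult.assoc, subst fps_mult_left_const_nth) (simp only: fps_mult_nth atLeast0AtMost)
  then show "fps_nth (dyck_gf lb rb) n =
      fps_nth (arch_gf lb rb + fps_const (1 - a) * arch_gf lb True * dyck_gf True rb) n"
    by (simp only: fps_add_nth dyck_gf_nth[of lb rb n])
qed

section \<open>The quadratic equation for K\<close>

lemma K_fps_quadratic:
  "(1 - fps_const a)^2 * (K_fps a r y)^2 - (1 - fps_const a) * (2 - beta_fps a r y) * K_fps a r y
     + 1 - beta_fps a r y + x_fps a r y = 0"
proof -
  let ?a = "fps_const a" and ?r = "fps_const r" and ?y = "fps_const y"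
  have arches: "arch_gf True True = fps_X^2 * ((1 - ?a) * ?r^2 * ?y^2 + ?a^2 * dyck_gf False False)"
    "arch_gf True False = fps_X^2 * ((1 - ?a) * ?r^2 * ?y + ?a^2 * dyck_gf False False)"
    "arch_gf False False = fps_X^2 * ((1 - ?a) * ?r^2 + ?a^2 * dyck_gf False False)"
    by (simp_all add: arch_gf_eq one_minus_fps_const power2_eq_square mult.assoc)
  have dycks: "dyck_gf True False = arch_gf True False + (1 - ?a) * arch_gf True True * dyck_gf True False"
    "dyck_gf False False = arch_gf False False + (1 - ?a) * arch_gf True False * dyck_gf True False"
    by (subst dyck_gf_eq; simp add: one_minus_fps_const arch_gf_False_True)+
  note quad = arch_system_quadratic[OF arches dycks]
  have "beta_fps a r y = 1 + fps_X^2 * (?a^2 - (1 - ?a)^2 * ?r^2 * (?y^2 + ?a^2 * (1 - ?y)^2 * fps_X^2))"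
    "x_fps a r y = ?a^2 * fps_X^2 * (1 + (1 - ?a)^2 * ?r^2 * ?y * (1 - ?y) * fps_X^2)^2"
    by (simp_all add: beta_fps_def x_fps_def tau_fps_def one_minus_fps_const mult.assoc)
  with quad show ?thesis
    by (simp add: K_fps_eq_arch_gf)
qed

lemma K_fps_closed_form:
  assumes "a \<noteq> 1"
  shows "K_fps a r y = fps_const (1 / (1 - a)) *
    (1 - fps_const (1/2) * beta_fps a r y - fps_const (1/2) * alpha_fps a r y)"
proof -
  let ?K = "K_fps a r y" and ?B = "beta_fps a r y"
  have "{es. length es = 0 \<and> excursion es} = {}"
    by (auto simp: excursion_def)
  then have "fps_nth ?K 0 = 0"
    unfolding K_fps_def K_coeff_def fps_nth_Abs_fps by (simp only: sum.empty)
  moreover have "fps_nth ?B 0 = 1" "fps_nth (x_fps a r y) 0 = 0"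
    by (simp_all add: beta_fps_def x_fps_def fps_X_power_mult_nth mult.assoc)
  ultimately have root: "alpha_fps a r y = 2 - ?B - 2 * (1 - fps_const a) * ?K"
    unfolding alpha_fps_def by (metis fps_quadratic_root_radical[OF K_fps_quadratic])
  have half: "2 * fps_const (1/2) = (1 :: real fps)"
    by (simp add: numeral_fps_const)
  have "1 - fps_const (1/2) * ?B - fps_const (1/2) * (2 - ?B - 2 * (1 - fps_const a) * ?K) =
      1 - 2 * fps_const (1/2) + 2 * fps_const (1/2) * (1 - fps_const a) * ?K"
    by algebra
  also have "\<dots> = (1 - fps_const a) * ?K"
    unfolding half by simp
  finally have "1 - fps_const (1/2) * ?B - fps_const (1/2) * alpha_fps a r y = (1 - fps_const a) * ?K"
    unfolding root .
  moreover have "fps_const (1 / (1 - a)) * (1 - fps_const a) = 1"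
    using assms by (simp add: one_minus_fps_const)
  ultimately show ?thesis
    by (metis mult.assoc mult_1)
qed

end

section \<open>Summing power series at z = 1\<close>

lemma sums_fps_nth_add:
  fixes f g :: "'a::real_normed_vector fps"
  shows "fps_nth f sums s \<Longrightarrow> fps_nth g sums t \<Longrightarrow> fps_nth (f + g) sums (s + t)"
  using sums_add by (simp add: fps_add_nth[abs_def])

lemma sums_fps_nth_diff:
  fixes f g :: "'a::real_normed_vector fps"
  shows "fps_nth f sums s \<Longrightarrow> fps_nth g sums t \<Longrightarrow> fps_nth (f - g) sums (s - t)"
  using sums_diff by (simp add: fps_sub_nth[abs_def])

lemma sums_fps_nth_const_mult:
  fixes f :: "'a::real_normed_algebra_1 fps"
  shows "fps_nth f sums s \<Longrightarrow> fps_nth (fps_const c * f) sums (c * s)"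
  using sums_mult by (simp add: fps_mult_left_const_nth[abs_def])

lemma sums_fps_nth_X_power_mult:
  fixes f :: "'a::{real_normed_vector,comm_ring_1} fps"
  assumes "fps_nth f sums s"
  shows "fps_nth (fps_X ^ k * f) sums s"
proof -
  let ?g = "\<lambda>n. if n < k then 0 else fps_nth f (n - k)"
  have "?g sums (s + (\<Sum>i<k. ?g i))"
    using sums_iff_shift[of ?g k s] assms by simp
  then have "?g sums s"
    by simp
  then show ?thesis
    by (simp add: fps_X_power_mult_nth[abs_def])
qed

lemma sums_fps_nth_X_power: "fps_nth (fps_X ^ k :: 'a::{real_normed_vector,comm_ring_1} fps) sums 1"
  using sums_single[of k "\<lambda>_. 1 :: 'a"] by (simp add: fps_X_power_nth[abs_def])

lemma sums_fps_nth_mult: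
  fixes f g :: "'a::{real_normed_algebra,banach,comm_ring_1} fps"
  assumes "summable (\<lambda>n. norm (fps_nth f n))" "summable (\<lambda>n. norm (fps_nth g n))"
  shows "fps_nth (f * g) sums (suminf (fps_nth f) * suminf (fps_nth g))"
  using Cauchy_product_sums[OF assms] by (simp add: fps_mult_nth[abs_def] atLeast0AtMost)

section \<open>The walk returns to the origin almost surely\<close>

lemma path_prob_nonneg: "0 \<le> a \<Longrightarrow> a \<le> 1 \<Longrightarrow> 0 \<le> path_prob a es"
  unfolding path_prob_def by (auto intro!: prod_nonneg)

lemma path_prob_snoc:
  assumes "es \<noteq> []"
  shows "path_prob a (es @ [b]) = path_prob a es * (if last es = b then a else 1 - a)"
proof -
  obtain m where m: "length es = Suc m"
    using assms by (cases es) auto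
  have "{i. Suc i < length (es @ [b])} = {..<Suc m}" "{i. Suc i < length es} = {..<m}"
    using m by auto
  moreover have "last es = es ! m"
    using m assms by (simp add: last_conv_nth)
  ultimately show ?thesis
    using assms m unfolding path_prob_def by (simp add: nth_append)
qed

lemma path_prob_snoc_sum: "path_prob a (es @ [True]) + path_prob a (es @ [False]) = path_prob a es"
proof (cases "es = []")
  case True
  then show ?thesis
    by (simp add: path_prob_def)
next
  case False
  then show ?thesis
    by (cases "last es") (simp_all add: path_prob_snoc algebra_simps)
qed

lemma sum_lists_length_Suc:
  fixes g :: "bool list \<Rightarrow> 'b::comm_monoid_add"
  shows "(\<Sum>s\<in>{s. length s = Suc m}. g s) = (\<Sum>s\<in>{s. length s = m}. g (s @ [True]) + g (s @ [False]))"
proof -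
  have "{s :: bool list. length s = Suc m} = (\<lambda>(s, b). s @ [b]) ` ({s. length s = m} \<times> UNIV)"
  proof (intro equalityI subsetI)
    fix s :: "bool list" assume "s \<in> {s. length s = Suc m}"
    then have "s \<noteq> []" "length (butlast s) = m"
      by auto
    then show "s \<in> (\<lambda>(s, b). s @ [b]) ` ({s. length s = m} \<times> UNIV)"
      by (intro image_eqI[of _ _ "(butlast s, last s)"]) (simp_all add: append_butlast_last_id)
  qed auto
  then have "(\<Sum>s\<in>{s. length s = Suc m}. g s) = (\<Sum>(s, b)\<in>{s. length s = m} \<times> UNIV. g (s @ [b]))"
    by (simp add: sum.reindex inj_on_def case_prod_unfold)
  also have "\<dots> = (\<Sum>s\<in>{s. length s = m}. g (s @ [True]) + g (s @ [False]))"
    by (simp add: sum.cartesian_product[symmetric] UNIV_bool add.commute)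
  finally show ?thesis .
qed

lemma sum_path_prob_extensions: "(\<Sum>s\<in>{s. length s = m}. path_prob a (p @ s)) = path_prob a p"
proof (induction m)
  case 0
  have "{s :: bool list. length s = 0} = {[]}"
    by auto
  then show ?case
    by simp
next
  case (Suc m)
  have "(\<Sum>s\<in>{s. length s = Suc m}. path_prob a (p @ s)) =
      (\<Sum>s\<in>{s. length s = m}. path_prob a ((p @ s) @ [True]) + path_prob a ((p @ s) @ [False]))"
    by (subst sum_lists_length_Suc) simp
  also have "\<dots> = (\<Sum>s\<in>{s. length s = m}. path_prob a (p @ s))"
    by (simp only: path_prob_snoc_sum)
  finally show ?case
    using Suc by simp
qed

lemma sum_path_prob_le_1:
  assumes "0 \<le> a" "a \<le> 1" "S \<subseteq> {es. length es = n}"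
  shows "sum (path_prob a) S \<le> 1"
proof -
  have "sum (path_prob a) S \<le> (\<Sum>es\<in>{es. length es = n}. path_prob a es)"
    using assms by (intro sum_mono2) (auto simp: finite_lists_length_UNIV path_prob_nonneg)
  also have "\<dots> = 1"
    using sum_path_prob_extensions[where m = n and p = "[]"] by (simp add: path_prob_def)
  finally show ?thesis .
qed

lemma sum_path_prob_prefix_closed_mono:
  assumes "0 \<le> a" "a \<le> 1" and prefix_closed: "\<And>s b. P (s @ [b]) \<Longrightarrow> P s"
  shows "(\<Sum>es\<in>{es. length es = Suc n \<and> P es}. path_prob a es) \<le>
    (\<Sum>es\<in>{es. length es = n \<and> P es}. path_prob a es)"
proof -
  note filter = sum.inter_filter[OF finite_lists_length_UNIV, simplified]
  have "P es \<Longrightarrow> P (butlast es)" for es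
    using prefix_closed[of "butlast es" "last es"] by (cases "es = []") auto
  then have "(\<Sum>es\<in>{es. length es = Suc n \<and> P es}. path_prob a es) \<le>
      (\<Sum>es\<in>{es. length es = Suc n}. if P (butlast es) then path_prob a es else 0)"
    unfolding filter using assms by (intro sum_mono) (simp add: path_prob_nonneg)
  also have "\<dots> = (\<Sum>s\<in>{s. length s = n}. if P s then path_prob a s else 0)"
    unfolding sum_lists_length_Suc by (intro sum.cong refl) (simp add: path_prob_snoc_sum)
  also have "\<dots> = (\<Sum>es\<in>{es. length es = n \<and> P es}. path_prob a es)"
    unfolding filter ..
  finally show ?thesis .
qed

definition first_return_at :: "nat \<Rightarrow> nat \<Rightarrow> bool list set" where
  "first_return_at n k = {es. length es = n \<and> excursion (take k es)}"

lemma K_coeff_1_1: "K_coeff a 1 1 k = (\<Sum>es\<in>{es. length es = k \<and> excursion es}. path_prob a es)"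
  by (simp add: K_coeff_def)

lemma sum_path_prob_first_return_at:
  assumes "k \<le> n"
  shows "sum (path_prob a) (first_return_at n k) = K_coeff a 1 1 k"
proof -
  let ?split = "\<lambda>(p, s). p @ s"
  have "first_return_at n k = ?split ` ({p. length p = k \<and> excursion p} \<times> {s. length s = n - k})"
  proof (intro equalityI subsetI)
    fix es assume "es \<in> first_return_at n k"
    then show "es \<in> ?split ` ({p. length p = k \<and> excursion p} \<times> {s. length s = n - k})"
      using assms by (intro image_eqI[of _ _ "(take k es, drop k es)"]) (auto simp: first_return_at_def)
  qed (use assms in \<open>auto simp: first_return_at_def\<close>)
  moreover have "inj_on ?split ({p. length p = k \<and> excursion p} \<times> {s. length s = n - k})"
    by (auto simp: inj_on_def)
  ultimately have "sum (path_prob a) (first_return_at n k) =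
      (\<Sum>p\<in>{p. length p = k \<and> excursion p}. \<Sum>s\<in>{s. length s = n - k}. path_prob a (p @ s))"
    by (simp add: sum.reindex sum.cartesian_product split_def)
  then show ?thesis
    by (simp add: sum_path_prob_extensions K_coeff_1_1)
qed

lemma first_return_at_disjoint:
  assumes "k < k'" "k' \<le> n"
  shows "first_return_at n k \<inter> first_return_at n k' = {}"
proof (rule ccontr)
  assume "first_return_at n k \<inter> first_return_at n k' \<noteq> {}"
  then obtain es where e: "excursion (take k es)" "excursion (take k' es)" and len: "length es = n"
    by (auto simp: first_return_at_def)
  then have "1 \<le> k" "k \<le> length es"
    using assms unfolding excursion_def by auto
  moreover have "pos (take k' es) k = pos (take k es) k"
    using assms by (simp add: pos_take)
  moreover have "pos (take k es) k = 0"
    using e(1) calculation(2) unfolding excursion_def by (simp add: min_def split: if_splits)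
  moreover have "k < length (take k' es)"
    using assms len by simp
  ultimately show False
    using e(2) unfolding excursion_def by auto
qed

lemma sum_K_coeff_1_1_eq:
  assumes "I \<subseteq> {..n}"
  shows "(\<Sum>k\<in>I. K_coeff a 1 1 k) = sum (path_prob a) (\<Union>k\<in>I. first_return_at n k)"
proof -
  have "finite I"
    using assms finite_subset by blast
  moreover have "first_return_at n k \<inter> first_return_at n k' = {}"
    if "k \<in> I" "k' \<in> I" "k \<noteq> k'" for k k'
    using that assms first_return_at_disjoint by (metis atMost_iff inf_commute linorder_neqE_nat subsetD)
  ultimately have "sum (path_prob a) (\<Union>k\<in>I. first_return_at n k) =
      (\<Sum>k\<in>I. sum (path_prob a) (first_return_at n k))"
    by (intro sum.UNION_disjoint) (auto simp: first_return_at_def finite_lists_length)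
  also have "\<dots> = (\<Sum>k\<in>I. K_coeff a 1 1 k)"
    using assms by (intro sum.cong refl sum_path_prob_first_return_at) auto
  finally show ?thesis ..
qed

lemma K_coeff_1_1_nonneg: "0 \<le> a \<Longrightarrow> a \<le> 1 \<Longrightarrow> 0 \<le> K_coeff a 1 1 k"
  unfolding K_coeff_1_1 by (intro sum_nonneg path_prob_nonneg)

lemma sum_K_coeff_1_1_le_1:
  assumes "0 \<le> a" "a \<le> 1"
  shows "(\<Sum>k\<le>n. K_coeff a 1 1 k) \<le> 1"
  unfolding sum_K_coeff_1_1_eq[OF order.refl]
  using assms by (intro sum_path_prob_le_1[where n = n]) (auto simp: first_return_at_def)

lemma summable_K_coeff_1_1:
  assumes "0 \<le> a" "a \<le> 1"
  shows "summable (K_coeff a 1 1)"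
proof (rule summableI_nonneg_bounded)
  show "0 \<le> K_coeff a 1 1 n" for n
    using K_coeff_1_1_nonneg assms by blast
  show "(\<Sum>i<n. K_coeff a 1 1 i) \<le> 1" for n
    using sum_K_coeff_1_1_le_1[OF assms, of n] K_coeff_1_1_nonneg[OF assms]
      sum_mono2[of "{..n}" "{..<n}" "K_coeff a 1 1"] by force
qed

lemma K_fps_1_1_quadratic:
  "fps_const ((1 - a)^2) * (K_fps a 1 1 * K_fps a 1 1) - fps_const (1 - a) * K_fps a 1 1
    + fps_const ((1 - a) * (2 * a - 1)) * (fps_X^2 * K_fps a 1 1) + fps_const ((1 - a)^2) * fps_X^2 = 0"
proof -
  let ?a = "fps_const a" and ?K = "K_fps a 1 1"
  have two_a: "2 * ?a - 1 = fps_const (2 * a - 1)"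
    by (simp add: fps_eq_iff numeral_fps_const)
  have "a^2 - (1 - a)^2 = 2 * a - 1"
    by (simp add: power2_eq_square algebra_simps)
  then have "beta_fps a 1 1 = 1 + fps_X^2 * (2 * ?a - 1)"
    unfolding beta_fps_def two_a by simp
  moreover have "x_fps a 1 1 = ?a^2 * fps_X^2"
    by (simp add: x_fps_def tau_fps_def)
  ultimately have "(1 - ?a)^2 * (?K * ?K) - (1 - ?a) * ?K + (1 - ?a) * (2 * ?a - 1) * (fps_X^2 * ?K)
      + (1 - ?a)^2 * fps_X^2 = 0"
    using K_fps_quadratic[of a 1 1] by algebra
  then show ?thesis
    unfolding one_minus_fps_const two_a by simp
qed

lemma K_coeff_1_1_sums_1:
  assumes "0 < a" "a < 1"
  shows "K_coeff a 1 1 sums 1"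
proof -
  let ?K = "K_fps a 1 1"
  define S where "S = suminf (K_coeff a 1 1)"
  have nth: "fps_nth ?K = K_coeff a 1 1"
    by (simp add: K_fps_def fun_eq_iff)
  have K: "fps_nth ?K sums S" and "summable (\<lambda>n. norm (fps_nth ?K n))"
    using summable_K_coeff_1_1 K_coeff_1_1_nonneg assms
    by (simp_all add: nth S_def summable_sums)
  then have "fps_nth (fps_const ((1 - a)^2) * (?K * ?K) - fps_const (1 - a) * ?K
      + fps_const ((1 - a) * (2 * a - 1)) * (fps_X^2 * ?K) + fps_const ((1 - a)^2) * fps_X^2)
      sums ((1 - a)^2 * (S * S) - (1 - a) * S + (1 - a) * (2 * a - 1) * S + (1 - a)^2 * 1)"
    using sums_fps_nth_mult[of ?K ?K] sums_unique[OF K]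
    by (intro sums_fps_nth_add sums_fps_nth_diff sums_fps_nth_const_mult
        sums_fps_nth_X_power_mult sums_fps_nth_X_power) auto
  then have "(1 - a)^2 * (S * S) - (1 - a) * S + (1 - a) * (2 * a - 1) * S + (1 - a)^2 * 1 = 0"
    unfolding K_fps_1_1_quadratic fps_zero_nth[abs_def] using sums_unique2 by blast
  then have "(1 - a)^2 * (S - 1)^2 = 0"
    by (simp add: algebra_simps power2_eq_square)
  with assms have "S = 1"
    by simp
  with K show ?thesis
    by (simp add: nth)
qed

section \<open>Conditioning on the height\<close>

definition prob_bounded_upto :: "real \<Rightarrow> nat \<Rightarrow> nat \<Rightarrow> real" where
  "prob_bounded_upto a N n = (\<Sum>es\<in>{es. length es = n \<and> bounded_upto (int N) es}. path_prob a es)"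

lemma bounded_upto_snoc: "bounded_upto N (s @ [b]) \<Longrightarrow> bounded_upto N s"
  unfolding bounded_upto_def
proof (intro allI impI)
  fix j
  assume bounded: "\<forall>j. 1 \<le> j \<and> j \<le> length (s @ [b]) \<and> (\<forall>i. 1 \<le> i \<and> i < j \<longrightarrow> pos (s @ [b]) i \<noteq> 0)
      \<longrightarrow> \<bar>pos (s @ [b]) j\<bar> \<le> N"
    and j: "1 \<le> j \<and> j \<le> length s \<and> (\<forall>i. 1 \<le> i \<and> i < j \<longrightarrow> pos s i \<noteq> 0)"
  have "\<forall>i. 1 \<le> i \<and> i < j \<longrightarrow> pos (s @ [b]) i \<noteq> 0"
    using j by (simp add: pos_append_left)
  then have "\<bar>pos (s @ [b]) j\<bar> \<le> N"
    using bounded j by simp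
  then show "\<bar>pos s j\<bar> \<le> N"
    using j by (simp add: pos_append_left)
qed

lemma prob_bounded_upto_bounds:
  assumes "0 \<le> a" "a \<le> 1"
  shows "0 \<le> prob_bounded_upto a N n" "prob_bounded_upto a N n \<le> 1"
  unfolding prob_bounded_upto_def using assms
  by (auto intro: sum_nonneg path_prob_nonneg sum_path_prob_le_1[where n = n])

lemma decseq_prob_bounded_upto: "0 \<le> a \<Longrightarrow> a \<le> 1 \<Longrightarrow> decseq (prob_bounded_upto a N)"
  unfolding decseq_Suc_iff prob_bounded_upto_def
  by (blast intro: sum_path_prob_prefix_closed_mono bounded_upto_snoc)

text \<open>An excursion that returns by time N cannot have left [-N, N].\<close>

lemma sum_K_coeff_1_1_le_prob_bounded_upto:
  assumes "N \<le> n" "0 \<le> a" "a \<le> 1"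
  shows "(\<Sum>k\<le>N. K_coeff a 1 1 k) \<le> prob_bounded_upto a N n"
  unfolding sum_K_coeff_1_1_eq[of "{..N}" n, OF atMost_subset_iff[THEN iffD2, OF assms(1)]]
    prob_bounded_upto_def
proof (rule sum_mono2)
  show "finite {es. length es = n \<and> bounded_upto (int N) es}"
    by (rule finite_lists_length)
  show "0 \<le> path_prob a es" for es
    by (rule path_prob_nonneg[OF assms(2,3)])
  show "(\<Union>k\<le>N. first_return_at n k) \<subseteq> {es. length es = n \<and> bounded_upto (int N) es}"
  proof
    fix es assume "es \<in> (\<Union>k\<le>N. first_return_at n k)"
    then obtain k where k: "k \<le> N" and es: "length es = n" "excursion (take k es)"
      by (auto simp: first_return_at_def)
    have "1 \<le> k" "pos es k = 0"
      using es k assms(1) unfolding excursion_def by (auto simp: pos_take)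
    then have "j \<le> N" if "1 \<le> j" "\<forall>i. 1 \<le> i \<and> i < j \<longrightarrow> pos es i \<noteq> 0" for j
      using that k by (meson dual_order.trans not_less)
    then have "bounded_upto (int N) es"
      unfolding bounded_upto_def using abs_pos_le by (meson of_nat_le_iff order_trans)
    with es show "es \<in> {es. length es = n \<and> bounded_upto (int N) es}"
      by simp
  qed
qed

lemma prob_H_le_bounds:
  assumes "0 \<le> a" "a \<le> 1"
  shows "(\<Sum>k\<le>N. K_coeff a 1 1 k) \<le> prob_H_le a N" "prob_H_le a N \<le> 1"
proof -
  obtain L where L: "prob_bounded_upto a N \<longlonglongrightarrow> L" "\<And>n. L \<le> prob_bounded_upto a N n"
    using decseq_convergent[OF decseq_prob_bounded_upto[OF assms], of 0]
      prob_bounded_upto_bounds[OF assms] by blast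
  have "prob_H_le a N = L"
    using limI[OF L(1)] by (simp add: prob_H_le_def prob_bounded_upto_def[abs_def])
  moreover have "L \<le> 1"
    using L(2) prob_bounded_upto_bounds(2)[OF assms] order_trans by blast
  moreover have "(\<Sum>k\<le>N. K_coeff a 1 1 k) \<le> L"
    using L(1) sum_K_coeff_1_1_le_prob_bounded_upto assms by (intro LIMSEQ_le_const) auto
  ultimately show "(\<Sum>k\<le>N. K_coeff a 1 1 k) \<le> prob_H_le a N" "prob_H_le a N \<le> 1"
    by simp_all
qed

lemma prob_H_le_tendsto_1:
  assumes "0 < a" "a < 1"
  shows "prob_H_le a \<longlonglongrightarrow> 1"
proof (rule tendsto_sandwich)
  have "(\<lambda>n. \<Sum>k<n. K_coeff a 1 1 k) \<longlonglongrightarrow> 1"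
    using K_coeff_1_1_sums_1[OF assms] by (simp add: sums_def)
  then have "(\<lambda>n. \<Sum>k<Suc n. K_coeff a 1 1 k) \<longlonglongrightarrow> 1"
    by (rule LIMSEQ_Suc)
  then show "(\<lambda>n. \<Sum>k\<le>n. K_coeff a 1 1 k) \<longlonglongrightarrow> 1"
    by (simp add: lessThan_Suc_atMost)
  show "\<forall>\<^sub>F n in sequentially. (\<Sum>k\<le>n. K_coeff a 1 1 k) \<le> prob_H_le a n"
    "\<forall>\<^sub>F n in sequentially. prob_H_le a n \<le> 1"
    using prob_H_le_bounds assms by simp_all
qed simp

lemma height_le_length:
  assumes "excursion es"
  shows "height es \<le> int (length es)"
proof -
  have "{1..length es} \<noteq> {}"
    using assms by (simp add: excursion_def)
  moreover have "\<bar>pos es j\<bar> \<le> int (length es)" if "j \<in> {1..length es}" for j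
    using abs_pos_le[of es j] that by auto
  ultimately show ?thesis
    unfolding height_def by (simp add: Max_le_iff)
qed

lemma cond_coeff_tendsto:
  assumes "0 < a" "a < 1"
  shows "(\<lambda>N. cond_coeff a r y N n) \<longlonglongrightarrow> fps_nth (K_fps a r y) n"
proof -
  have "(\<lambda>N. K_coeff a r y n / prob_H_le a N) \<longlonglongrightarrow> K_coeff a r y n / 1"
    by (intro tendsto_divide tendsto_const prob_H_le_tendsto_1 assms) simp
  moreover have "K_coeff a r y n / prob_H_le a N = cond_coeff a r y N n" if "n \<le> N" for N
  proof -
    have "{es. length es = n \<and> excursion es \<and> height es \<le> int N} = {es. length es = n \<and> excursion es}"
      using height_le_length that by force
    then show ?thesis
      unfolding cond_coeff_def K_coeff_def by simp
  qed
  ultimately show ?thesis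
    unfolding K_fps_def by (auto intro: Lim_transform_eventually eventually_sequentiallyI)
qed

theorem corollary3:
  fixes a r y :: real
  assumes "0 < a" and "a < 1"
  shows "K_fps a r y = fps_const (1 / (1 - a)) *
           (1 - fps_const (1/2) * beta_fps a r y - fps_const (1/2) * alpha_fps a r y)
         \<and> (\<forall>n. (\<lambda>N. cond_coeff a r y N n) \<longlonglongrightarrow> fps_nth (K_fps a r y) n)"
  using K_fps_closed_form cond_coeff_tendsto assms by simp

end
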